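(* The detour sequence of every path-unicyclic graph is full.
   Context: All graphs are finite and simple. A path-unicyclic graph is a graph obtained from a cycle $C$ by attaching pairwise vertex-disjoint paths to some (at least one, possibly all) of the vertices of $C$, at most one path per vertex of $C$, where each attached path meets $C$ only in one of its endvertices (the attached path being joined to $C$ at that vertex). The order of a path is its number of vertices. For a vertex $v$, $\tau(v)$ is the order of a longest path in the graph having $v$ as an endvertex. The detour sequence is the nondecreasing sequence $d_1\le\cdots\le d_n$ of the values $\tau(v)$ over all vertices. It is full if every integer $k$ with $d_1\le k\le d_n$ occurs in it, equivalently $d_i-d_{i-1}\le 1$ for all $2\le i\le n$. *)

theory Defs
  imports Main
begin

text \<open>A finite simple graph is given by a vertex set V and a symmetric,
irreflexive adjacency relation E.\<close>

definition gpath :: "'a set \<Rightarrow> ('a \<Rightarrow> 'a \<Rightarrow> bool) \<Rightarrow> 'a list \<Rightarrow> bool" where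
  "gpath V E xs \<longleftrightarrow> xs \<noteq> [] \<and> distinct xs \<and> set xs \<subseteq> V \<and>
     (\<forall>i. Suc i < length xs \<longrightarrow> E (xs ! i) (xs ! Suc i))"

definition tau :: "'a set \<Rightarrow> ('a \<Rightarrow> 'a \<Rightarrow> bool) \<Rightarrow> 'a \<Rightarrow> nat" where
  "tau V E v = Max {length xs | xs. gpath V E xs \<and> (hd xs = v \<or> last xs = v)}"

definition detour_full :: "'a set \<Rightarrow> ('a \<Rightarrow> 'a \<Rightarrow> bool) \<Rightarrow> bool" where
  "detour_full V E \<longleftrightarrow>
     (\<forall>k. Min (tau V E ` V) \<le> k \<and> k \<le> Max (tau V E ` V) \<longrightarrow> (\<exists>v\<in>V. tau V E v = k))"

text \<open>Path-unicyclic graph: cycle C (list of distinct vertices, length \<ge> 3,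
consecutive and last-first adjacent); for each cycle vertex c, P c lists the
new vertices of the path attached at c, in order away from c (P c = [] means
no path attached at c).\<close>
definition path_unicyclic :: "'a set \<Rightarrow> ('a \<Rightarrow> 'a \<Rightarrow> bool) \<Rightarrow> bool" where
  "path_unicyclic V E \<longleftrightarrow>
    (\<exists>(C :: 'a list) (P :: 'a \<Rightarrow> 'a list).
       distinct C \<and> 3 \<le> length C \<and>
       (\<forall>c\<in>set C. distinct (P c) \<and> set (P c) \<inter> set C = {}) \<and>
       (\<forall>c\<in>set C. \<forall>d\<in>set C. c \<noteq> d \<longrightarrow> set (P c) \<inter> set (P d) = {}) \<and>
       (\<exists>c\<in>set C. P c \<noteq> []) \<and>
       V = set C \<union> (\<Union>c\<in>set C. set (P c)) \<and>
       (\<forall>x y. E x y \<longleftrightarrow>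
          (\<exists>i<length C. {x, y} = {C ! i, C ! ((Suc i) mod length C)}) \<or>
          (\<exists>c\<in>set C. P c \<noteq> [] \<and> {x, y} = {c, hd (P c)}) \<or>
          (\<exists>c\<in>set C. \<exists>i. Suc i < length (P c) \<and> {x, y} = {P c ! i, P c ! Suc i})))"

end

theory Submission
  imports Defs
begin

(* Across an edge ab that is the only edge leaving some vertex set, tau changes by at most
   one: a longest path starting at a either avoids b, and then extends by b, or has to step
   to b at once, and then dropping a leaves a path starting at b.  The edges of an attached
   path and the edge joining it to the cycle are of this kind, so on each branch (a cycle
   vertex together with its path) tau takes every value between its extremes.
   If adjacent cycle vertices u, v had tau v + 2 <= tau u, a longest path from u would pass
   through v as an interior vertex whose two neighbours on the path differ from u.  As v has
   only two neighbours on the cycle, the path continues into the path attached at v and,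
   unable to leave it again, ends there, at a vertex w with tau w >= tau u.
   So a value k missed by tau would split the vertices into those below and those above k,
   with no branch and no cycle edge meeting both sides; this contradicts connectedness. *)

lemma exists_change_point:
  fixes Q :: "nat \<Rightarrow> bool"
  assumes "m \<le> n" "Q m" "\<not> Q n"
  shows "\<exists>k. m \<le> k \<and> k < n \<and> Q k \<and> \<not> Q (Suc k)"
  using assms
proof (induction n rule: dec_induct)
  case (step n)
  then show ?case by (cases "Q n") (auto intro: less_SucI)
qed simp

lemma nat_ivt_unit_steps:
  fixes f :: "nat \<Rightarrow> nat"
  assumes steps: "\<And>m. m < n \<Longrightarrow> f (Suc m) \<le> f m + 1 \<and> f m \<le> f (Suc m) + 1"
    and "i \<le> n" "j \<le> n" "f i \<le> k" "k \<le> f j"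
  shows "\<exists>m\<le>n. f m = k"
proof (cases "f i = k \<or> f j = k")
  case True
  then show ?thesis using assms by blast
next
  case False
  with assms have below: "f i < k" and above: "k < f j" by auto
  show ?thesis
  proof (cases "i \<le> j")
    case True
    with below above obtain m where "m < j" "f m < k" "\<not> f (Suc m) < k"
      using exists_change_point[of i j "\<lambda>m. f m < k"] by auto
    with steps[of m] \<open>j \<le> n\<close> show ?thesis by (intro exI[of _ "Suc m"]) auto
  next
    case False
    with below above obtain m where "m < i" "k \<le> f m" "\<not> k \<le> f (Suc m)"
      using exists_change_point[of j i "\<lambda>m. k \<le> f m"] by auto
    with steps[of m] \<open>i \<le> n\<close> show ?thesis by (intro exI[of _ m]) auto
  qed
qed

lemma Suc_mod_pred:
  fixes i n :: nat
  assumes "i < n"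
  shows "(Suc i mod n + n - 1) mod n = i"
proof (cases "Suc i = n")
  case False
  with assms have "Suc i mod n + n - 1 = i + n"
    by simp
  with assms show ?thesis by simp
qed simp

lemma nth_in_set_drop_iff:
  assumes "distinct xs" "i < length xs"
  shows "xs ! i \<in> set (drop m xs) \<longleftrightarrow> m \<le> i"
proof
  assume "xs ! i \<in> set (drop m xs)"
  show "m \<le> i"
  proof (rule ccontr)
    assume "\<not> m \<le> i"
    with assms(2) have "xs ! i \<in> set (take m xs)"
      by (metis in_set_conv_nth length_take min_less_iff_conj not_le nth_take)
    with \<open>xs ! i \<in> set (drop m xs)\<close> show False
      using set_take_disj_set_drop_if_distinct[OF assms(1) order_refl] by blast
  qed
next
  assume "m \<le> i"
  with assms(2) have "drop m xs ! (i - m) = xs ! i" "i - m < length (drop m xs)"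
    by auto
  then show "xs ! i \<in> set (drop m xs)"
    by (metis nth_mem)
qed

lemma gpath_nth_inj:
  "gpath V E Q \<Longrightarrow> i < length Q \<Longrightarrow> j < length Q \<Longrightarrow> Q ! i = Q ! j \<Longrightarrow> i = j"
  unfolding gpath_def using nth_eq_iff_index_eq by blast

lemma gpath_Cons:
  assumes "gpath V E Q" "y \<in> V" "y \<notin> set Q" "E y (hd Q)"
  shows "gpath V E (y # Q)"
  unfolding gpath_def
proof (intro conjI allI impI)
  show "y # Q \<noteq> []" "distinct (y # Q)" "set (y # Q) \<subseteq> V"
    using assms by (auto simp: gpath_def)
  fix i assume "Suc i < length (y # Q)"
  then show "E ((y # Q) ! i) ((y # Q) ! Suc i)"
    using assms by (cases i) (auto simp: gpath_def hd_conv_nth)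
qed

lemma gpath_ConsD:
  assumes "gpath V E (x # Q)" "Q \<noteq> []"
  shows "gpath V E Q"
  using assms unfolding gpath_def
  by (metis Suc_less_eq distinct.simps(2) length_Cons nth_Cons_Suc set_subset_Cons subset_trans)

lemma gpath_rev:
  assumes "symp E" "gpath V E Q"
  shows "gpath V E (rev Q)"
  unfolding gpath_def
proof (intro conjI allI impI)
  show "rev Q \<noteq> []" "distinct (rev Q)" "set (rev Q) \<subseteq> V"
    using assms(2) by (auto simp: gpath_def)
  fix i assume i: "Suc i < length (rev Q)"
  define j where "j = length Q - Suc (Suc i)"
  have "E (Q ! j) (Q ! Suc j)"
    using assms(2) i by (simp add: gpath_def j_def)
  moreover have "rev Q ! i = Q ! Suc j" "rev Q ! Suc i = Q ! j"
    using i by (simp_all add: rev_nth j_def Suc_diff_Suc)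
  ultimately show "E (rev Q ! i) (rev Q ! Suc i)"
    using assms(1) by (simp add: sympD)
qed

lemma finite_gpath_lengths:
  assumes "finite V"
  shows "finite {length xs |xs. gpath V E xs \<and> R xs}"
proof (rule finite_subset)
  show "{length xs |xs. gpath V E xs \<and> R xs} \<subseteq> {..card V}"
    using assms unfolding gpath_def by (auto intro: card_mono simp flip: distinct_card)
qed simp

lemma length_le_tau:
  assumes "finite V" "gpath V E Q" "hd Q = v \<or> last Q = v"
  shows "length Q \<le> tau V E v"
  unfolding tau_def using assms by (intro Max_ge finite_gpath_lengths) auto

lemma tau_attained:
  assumes "finite V" "symp E" "v \<in> V"
  obtains Q where "gpath V E Q" "hd Q = v" "length Q = tau V E v"
proof -
  have "gpath V E [v]"
    using assms(3) by (simp add: gpath_def)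
  then have "tau V E v \<in> {length xs |xs. gpath V E xs \<and> (hd xs = v \<or> last xs = v)}"
    unfolding tau_def using assms(1) by (intro Max_in finite_gpath_lengths) force+
  then obtain Q where Q: "gpath V E Q" "hd Q = v \<or> last Q = v" "length Q = tau V E v"
    by auto
  show thesis
  proof (cases "hd Q = v")
    case True
    with Q that show ?thesis by blast
  next
    case False
    with Q have "hd (rev Q) = v"
      by (auto simp: hd_rev gpath_def)
    with Q gpath_rev[OF assms(2)] that show ?thesis by force
  qed
qed

lemma length_Cons_le_tau:
  assumes "finite V" "symp E" "gpath V E Q" "v \<in> V" "v \<notin> set Q" "E (hd Q) v"
  shows "length Q + 1 \<le> tau V E v"
proof -
  have "gpath V E (v # Q)"
    using gpath_Cons[OF assms(3-5)] sympD[OF assms(2,6)] .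
  then have "length (v # Q) \<le> tau V E v"
    by (rule length_le_tau[OF assms(1)]) simp
  then show ?thesis by simp
qed

lemma length_le_tau_second:
  assumes "finite V" "gpath V E Q" "Suc 0 < length Q"
  shows "length Q \<le> tau V E (Q ! 1) + 1"
proof -
  obtain x Q' where Q': "Q = x # Q'" "Q' \<noteq> []"
    using assms(3) by (cases Q) auto
  with assms(2) have "gpath V E Q'" "hd Q' = Q ! 1"
    by (auto simp: gpath_ConsD hd_conv_nth)
  then have "length Q' \<le> tau V E (Q ! 1)"
    using length_le_tau[OF assms(1)] by blast
  with Q'(1) show ?thesis by simp
qed

definition sole_crossing_edge :: "('a \<Rightarrow> 'a \<Rightarrow> bool) \<Rightarrow> 'a set \<Rightarrow> 'a \<Rightarrow> 'a \<Rightarrow> bool" where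
  "sole_crossing_edge E S a b \<longleftrightarrow>
     a \<in> S \<and> b \<notin> S \<and> (\<forall>x y. E x y \<longrightarrow> x \<in> S \<longrightarrow> y \<notin> S \<longrightarrow> x = a \<and> y = b)"

lemma sole_crossing_edge_Compl:
  "symp E \<Longrightarrow> sole_crossing_edge E S a b \<Longrightarrow> sole_crossing_edge E (- S) b a"
  unfolding sole_crossing_edge_def by (blast dest: sympD)

lemma gpath_crossing_index:
  assumes cross: "sole_crossing_edge E S a b" and Q: "gpath V E Q"
    and "i \<le> j" "j < length Q" "Q ! i \<in> S" "Q ! j \<notin> S"
  obtains l where "i \<le> l" "l < j" "Q ! l = a" "Q ! Suc l = b"
proof -
  obtain l where l: "i \<le> l" "l < j" "Q ! l \<in> S" "Q ! Suc l \<notin> S"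
    using exists_change_point[of i j "\<lambda>l. Q ! l \<in> S"] assms(3-6) by blast
  moreover have "E (Q ! l) (Q ! Suc l)"
    using Q l(2) \<open>j < length Q\<close> by (simp add: gpath_def)
  ultimately show thesis
    using cross that unfolding sole_crossing_edge_def by blast
qed

lemma gpath_from_sole_crossing:
  assumes cross: "sole_crossing_edge E S a b" and Q: "gpath V E Q"
    and "hd Q = a" "b \<in> set Q"
  shows "Suc 0 < length Q" "Q ! 1 = b"
proof -
  have "Q \<noteq> []"
    using Q by (simp add: gpath_def)
  with \<open>hd Q = a\<close> have Q0: "Q ! 0 = a"
    by (simp add: hd_conv_nth)
  obtain j where j: "j < length Q" "Q ! j = b"
    using \<open>b \<in> set Q\<close> by (metis in_set_conv_nth)
  obtain l where l: "l < j" "Q ! l = a" "Q ! Suc l = b"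
    using gpath_crossing_index[OF cross Q, of 0 j] cross j Q0
    unfolding sole_crossing_edge_def by auto
  with j Q0 gpath_nth_inj[OF Q, of l 0] \<open>Q \<noteq> []\<close> have "l = 0"
    by simp
  with l j show "Suc 0 < length Q" "Q ! 1 = b"
    by simp_all
qed

lemma gpath_before_sole_crossing:
  assumes "symp E" "sole_crossing_edge E S a b" and Q: "gpath V E Q"
    and "Q ! k = b" "k < length Q" "Q ! 0 \<notin> S" "i \<le> k"
  shows "Q ! i \<notin> S"
proof
  assume "Q ! i \<in> S"
  with assms obtain l where "l < i" "Q ! l = b"
    using gpath_crossing_index[OF sole_crossing_edge_Compl[OF assms(1,2)] Q, of 0 i] by auto
  with assms gpath_nth_inj[OF Q, of l k] show False
    by simp
qed

lemma gpath_after_sole_crossing: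
  assumes "sole_crossing_edge E S a b" and Q: "gpath V E Q"
    and "Q ! k = b" "Q ! Suc k \<in> S" "Suc k \<le> j" "j < length Q"
  shows "Q ! j \<in> S"
proof (rule ccontr)
  assume "Q ! j \<notin> S"
  with assms obtain l where "Suc k \<le> l" "l < j" "Q ! Suc l = b"
    using gpath_crossing_index[OF assms(1) Q, of "Suc k" j] by auto
  with assms gpath_nth_inj[OF Q, of "Suc l" k] show False
    by simp
qed

lemma tau_le_across_sole_crossing:
  assumes "finite V" "symp E" "a \<in> V" "b \<in> V" "E a b"
    and cross: "sole_crossing_edge E S a b"
  shows "tau V E a \<le> tau V E b + 1"
proof -
  obtain Q where Q: "gpath V E Q" "hd Q = a" "length Q = tau V E a"
    using tau_attained[OF assms(1-3)] by blast
  show ?thesis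
  proof (cases "b \<in> set Q")
    case False
    with length_Cons_le_tau[OF assms(1,2) Q(1) \<open>b \<in> V\<close>] Q(2,3) \<open>E a b\<close> show ?thesis
      by simp
  next
    case True
    with gpath_from_sole_crossing[OF cross Q(1,2)] length_le_tau_second[OF \<open>finite V\<close> Q(1)] Q(3)
    show ?thesis
      by simp
  qed
qed

lemma tau_sole_crossing_edge:
  assumes "finite V" "symp E" "a \<in> V" "b \<in> V" "E a b" "sole_crossing_edge E S a b"
  shows "tau V E a \<le> tau V E b + 1 \<and> tau V E b \<le> tau V E a + 1"
  using tau_le_across_sole_crossing[OF assms]
    tau_le_across_sole_crossing[OF assms(1,2,4,3) sympD[OF assms(2,5)]
      sole_crossing_edge_Compl[OF assms(2,6)]]
  by simp

lemma longest_path_interior: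
  assumes "finite V" "symp E" and Q: "gpath V E Q" "hd Q = u" "length Q = tau V E u"
    and "v \<in> V" "E u v" and gap: "tau V E v + 2 \<le> tau V E u"
  obtains k where "2 \<le> k" "Suc k < length Q" "Q ! k = v"
proof -
  have "v \<in> set Q"
    using length_Cons_le_tau[OF assms(1,2) Q(1) \<open>v \<in> V\<close>] Q \<open>E u v\<close> gap by force
  then obtain k where k: "k < length Q" "Q ! k = v"
    by (metis in_set_conv_nth)
  have "Q \<noteq> []"
    using Q(1) by (simp add: gpath_def)
  have "u \<noteq> v"
    using gap by auto
  with k Q(2) \<open>Q \<noteq> []\<close> have "k \<noteq> 0"
    by (metis hd_conv_nth)
  moreover have "k \<noteq> 1"
    using length_le_tau_second[OF \<open>finite V\<close> Q(1)] k Q(3) gap by auto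
  moreover have "Suc k \<noteq> length Q"
  proof
    assume "Suc k = length Q"
    with k \<open>Q \<noteq> []\<close> have "last Q = v"
      by (metis diff_Suc_1 last_conv_nth)
    with length_le_tau[OF \<open>finite V\<close> Q(1), of v] Q(3) gap show False
      by simp
  qed
  ultimately have "2 \<le> k" "Suc k < length Q"
    using k(1) by linarith+
  with that k(2) show thesis by blast
qed

(* Unlike path_unicyclic, no attached path is required to be nonempty: the argument does
   not need it. *)
locale cycle_with_paths =
  fixes V :: "'a set" and E :: "'a \<Rightarrow> 'a \<Rightarrow> bool" and C :: "'a list" and P :: "'a \<Rightarrow> 'a list"
  assumes distinct_C: "distinct C" and length_C: "3 \<le> length C"
    and distinct_P: "\<And>c. c \<in> set C \<Longrightarrow> distinct (P c)"
    and P_disjoint_C: "\<And>c. c \<in> set C \<Longrightarrow> set (P c) \<inter> set C = {}"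
    and P_disjoint: "\<And>c d. c \<in> set C \<Longrightarrow> d \<in> set C \<Longrightarrow> c \<noteq> d \<Longrightarrow> set (P c) \<inter> set (P d) = {}"
    and V_eq: "V = set C \<union> (\<Union>c\<in>set C. set (P c))"
    and E_iff: "\<And>x y. E x y \<longleftrightarrow>
          (\<exists>i<length C. {x, y} = {C ! i, C ! (Suc i mod length C)}) \<or>
          (\<exists>c\<in>set C. P c \<noteq> [] \<and> {x, y} = {c, hd (P c)}) \<or>
          (\<exists>c\<in>set C. \<exists>i. Suc i < length (P c) \<and> {x, y} = {P c ! i, P c ! Suc i})"
begin

abbreviation branch :: "'a \<Rightarrow> 'a list" where
  "branch c \<equiv> c # P c"

lemma finite_V: "finite V"
  using V_eq by simp

lemma symp_E: "symp E"
  by (rule sympI) (simp add: E_iff insert_commute)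

lemma set_branch_subset_V: "c \<in> set C \<Longrightarrow> set (branch c) \<subseteq> V"
  using V_eq by auto

lemma V_branchE:
  assumes "x \<in> V"
  obtains c where "c \<in> set C" "x \<in> set (branch c)"
  using assms V_eq by auto

lemma nth_mod_in_C [simp]: "C ! (j mod length C) \<in> set C"
  using length_C by (intro nth_mem mod_less_divisor) auto

lemma edgeE:
  assumes "E x y"
  obtains (cycle) i where "i < length C" "{x, y} = {C ! i, C ! (Suc i mod length C)}"
    | (attach) c where "c \<in> set C" "P c \<noteq> []" "{x, y} = {c, hd (P c)}"
    | (path) c i where "c \<in> set C" "Suc i < length (P c)" "{x, y} = {P c ! i, P c ! Suc i}"
  using assms E_iff by blast

lemma cycle_edge:
  assumes "Suc i < length C"
  shows "E (C ! i) (C ! Suc i)"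
  unfolding E_iff by (intro disjI1 exI[of _ i]) (use assms in auto)

lemma branch_edge:
  assumes "c \<in> set C" "m < length (P c)"
  shows "E (P c ! m) (branch c ! m)"
proof (cases m)
  case 0
  then show ?thesis
    unfolding E_iff by (intro disjI2 disjI1 bexI[of _ c]) (use assms in \<open>auto simp: hd_conv_nth\<close>)
next
  case (Suc i)
  then show ?thesis
    unfolding E_iff by (intro disjI2 bexI[of _ c] exI[of _ i]) (use assms in auto)
qed

lemma in_P_not_in_C: "c \<in> set C \<Longrightarrow> x \<in> set (P c) \<Longrightarrow> x \<notin> set C"
  using P_disjoint_C by blast

lemma in_P_unique: "c \<in> set C \<Longrightarrow> d \<in> set C \<Longrightarrow> x \<in> set (P c) \<Longrightarrow> x \<in> set (P d) \<Longrightarrow> c = d"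
  using P_disjoint by blast

lemma edge_at_P_vertex:
  assumes c: "c \<in> set C" and x: "x \<in> set (P c)" and "E x y"
  shows "x = hd (P c) \<and> y = c \<or> (\<exists>i. Suc i < length (P c) \<and> {x, y} = {P c ! i, P c ! Suc i})"
  using \<open>E x y\<close>
proof (cases rule: edgeE)
  case (cycle i)
  then have "x \<in> set C"
    by (auto simp: doubleton_eq_iff)
  with in_P_not_in_C[OF c x] show ?thesis by simp
next
  case (attach d)
  with in_P_not_in_C[OF c x] have "x = hd (P d)" "y = d"
    by (auto simp: doubleton_eq_iff)
  moreover from this attach in_P_unique[OF c _ x] have "d = c"
    by auto
  ultimately show ?thesis by simp
next
  case (path d i)
  then have "x \<in> set (P d)"
    by (auto simp: doubleton_eq_iff)
  with path in_P_unique[OF c _ x] show ?thesis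
    by auto
qed

(* branch c ! m is the vertex preceding P c ! m = branch c ! Suc m on the branch. *)
lemma branch_sole_crossing:
  assumes c: "c \<in> set C" and m: "m < length (P c)"
  shows "sole_crossing_edge E (set (drop m (P c))) (P c ! m) (branch c ! m)"
proof -
  let ?p = "P c" and ?S = "set (drop m (P c))"
  have p: "distinct ?p"
    using distinct_P[OF c] .
  have "?p ! m \<in> ?S"
    using nth_in_set_drop_iff[OF p m] by simp
  moreover have "branch c ! m \<notin> ?S"
  proof (cases m)
    case 0
    then show ?thesis
      using in_P_not_in_C[OF c] c by (auto dest: in_set_dropD)
  next
    case (Suc i)
    then show ?thesis
      using nth_in_set_drop_iff[OF p, of i m] m by simp
  qed
  moreover have "x = ?p ! m \<and> y = branch c ! m"
    if "E x y" and x: "x \<in> ?S" and y: "y \<notin> ?S" for x y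
  proof -
    have "x \<in> set ?p"
      using x by (rule in_set_dropD)
    from edge_at_P_vertex[OF c this \<open>E x y\<close>] show ?thesis
    proof (elim disjE exE conjE)
      assume "x = hd ?p" "y = c"
      have "?p \<noteq> []"
        using m by auto
      with \<open>x = hd ?p\<close> have "x = ?p ! 0"
        by (simp add: hd_conv_nth)
      with x \<open>?p \<noteq> []\<close> have "m = 0"
        using nth_in_set_drop_iff[OF p, of 0 m] by simp
      with \<open>x = ?p ! 0\<close> \<open>y = c\<close> show ?thesis
        by simp
    next
      fix i
      assume i: "Suc i < length ?p" and "{x, y} = {?p ! i, ?p ! Suc i}"
      then consider "x = ?p ! i" "y = ?p ! Suc i" | "x = ?p ! Suc i" "y = ?p ! i"
        by (auto simp: doubleton_eq_iff)
      then show ?thesis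
        using x y i nth_in_set_drop_iff[OF p, of i m] nth_in_set_drop_iff[OF p, of "Suc i" m]
        by cases (auto simp: le_Suc_eq)
    qed
  qed
  ultimately show ?thesis
    unfolding sole_crossing_edge_def by blast
qed

lemma branch_tau_step:
  assumes "c \<in> set C" "m < length (P c)"
  shows "tau V E (branch c ! Suc m) \<le> tau V E (branch c ! m) + 1 \<and>
         tau V E (branch c ! m) \<le> tau V E (branch c ! Suc m) + 1"
proof -
  have "Suc m < length (branch c)" "m < length (branch c)"
    using assms(2) by simp_all
  then have "branch c ! Suc m \<in> V" "branch c ! m \<in> V"
    using set_branch_subset_V[OF assms(1)] nth_mem by blast+
  then show ?thesis
    using tau_sole_crossing_edge[OF finite_V symp_E _ _ branch_edge[OF assms]
        branch_sole_crossing[OF assms]] by simp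
qed

lemma branch_tau_interval:
  assumes c: "c \<in> set C" and "x \<in> set (branch c)" "y \<in> set (branch c)"
    and "tau V E x \<le> k" "k \<le> tau V E y"
  shows "\<exists>z\<in>set (branch c). tau V E z = k"
proof -
  let ?f = "\<lambda>i. tau V E (branch c ! i)"
  obtain i j where "i \<le> length (P c)" "branch c ! i = x" "j \<le> length (P c)" "branch c ! j = y"
    using assms(2,3) by (metis in_set_conv_nth length_Cons less_Suc_eq_le)
  then obtain m where "m \<le> length (P c)" "?f m = k"
    using nat_ivt_unit_steps[of "length (P c)" ?f i j k] branch_tau_step[OF c] assms(4,5)
    by auto
  then show ?thesis
    by (metis length_Cons less_Suc_eq_le nth_mem)
qed

lemma P_sole_crossing:
  assumes "c \<in> set C" "P c \<noteq> []"
  shows "sole_crossing_edge E (set (P c)) (hd (P c)) c"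
  using branch_sole_crossing[OF assms(1), of 0] assms(2) by (simp add: hd_conv_nth)

lemma cycle_vertex_neighbours:
  assumes "v \<in> set C"
  obtains s t where "\<And>x. E x v \<Longrightarrow> x \<notin> set (P v) \<Longrightarrow> x = s \<or> x = t"
proof -
  let ?n = "length C"
  obtain j where j: "j < ?n" "C ! j = v"
    using assms by (meson in_set_conv_nth)
  have "x = C ! (Suc j mod ?n) \<or> x = C ! ((j + ?n - 1) mod ?n)"
    if "E x v" "x \<notin> set (P v)" for x
    using \<open>E x v\<close>
  proof (cases rule: edgeE)
    case (cycle i)
    have "Suc i mod ?n < ?n"
      using j(1) by (intro mod_less_divisor) linarith
    with cycle j consider "x = C ! i" "j = Suc i mod ?n" | "x = C ! (Suc i mod ?n)" "j = i"
      using nth_eq_iff_index_eq[OF distinct_C] by (auto simp: doubleton_eq_iff)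
    then show ?thesis
    proof cases
      case 1
      with Suc_mod_pred[OF cycle(1)] show ?thesis by simp
    qed simp
  next
    case (attach d)
    then have "hd (P d) \<in> set (P d)"
      by simp
    with attach assms in_P_not_in_C have "v = d" "x = hd (P v)"
      by (auto simp: doubleton_eq_iff)
    with attach that(2) show ?thesis by simp
  next
    case (path d i)
    then have "v \<in> set (P d)"
      by (auto simp: doubleton_eq_iff)
    with path assms in_P_not_in_C show ?thesis by blast
  qed
  with that show thesis by blast
qed

lemma third_neighbour_in_P:
  assumes "v \<in> set C" "distinct [x, y, z]" "E x v" "E y v" "E z v"
    and "x \<notin> set (P v)" "y \<notin> set (P v)"
  shows "z \<in> set (P v)"
proof (rule ccontr)
  assume "z \<notin> set (P v)"
  obtain s t where "\<And>w. E w v \<Longrightarrow> w \<notin> set (P v) \<Longrightarrow> w = s \<or> w = t"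
    using cycle_vertex_neighbours[OF assms(1)] by blast
  with assms \<open>z \<notin> set (P v)\<close> have "x \<in> {s, t}" "y \<in> {s, t}" "z \<in> {s, t}"
    by auto
  with assms(2) show False
    by auto
qed

lemma cycle_edge_tau_gap:
  assumes u: "u \<in> set C" and v: "v \<in> set C" and "E u v" and gap: "tau V E v + 2 \<le> tau V E u"
  shows "\<exists>w\<in>set (P v). tau V E u \<le> tau V E w"
proof -
  have "u \<in> V" "v \<in> V"
    using u v V_eq by auto
  obtain Q where Q: "gpath V E Q" "hd Q = u" "length Q = tau V E u"
    using tau_attained[OF finite_V symp_E \<open>u \<in> V\<close>] by blast
  obtain k where k: "2 \<le> k" "Suc k < length Q" "Q ! k = v"
    using longest_path_interior[OF finite_V symp_E Q \<open>v \<in> V\<close> \<open>E u v\<close> gap] by blast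
  have "Q \<noteq> []"
    using Q(1) by (simp add: gpath_def)
  with Q(2) have Q0: "Q ! 0 = u"
    by (simp add: hd_conv_nth)
  have edge: "E (Q ! i) (Q ! Suc i)" if "Suc i < length Q" for i
    using Q(1) that by (simp add: gpath_def)
  have "Suc (k - 1) = k"
    using k(1) by simp
  then have pred: "E (Q ! (k - 1)) v" and succ: "E (Q ! Suc k) v"
    using edge[of "k - 1"] sympD[OF symp_E edge[of k]] k by simp_all
  have "0 < k - 1" "k - 1 < length Q"
    using k by auto
  then have "distinct [u, Q ! (k - 1), Q ! Suc k]"
    using gpath_nth_inj[OF Q(1), of 0 "k - 1"] gpath_nth_inj[OF Q(1), of 0 "Suc k"]
      gpath_nth_inj[OF Q(1), of "k - 1" "Suc k"] Q0 k \<open>Q \<noteq> []\<close> by auto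
  have "u \<notin> set (P v)"
    using in_P_not_in_C[OF v] u by blast
  have "Q ! (k - 1) \<notin> set (P v)"
  proof
    assume "Q ! (k - 1) \<in> set (P v)"
    then have "P v \<noteq> []"
      by auto
    from gpath_before_sole_crossing[OF symp_E P_sole_crossing[OF v this] Q(1) k(3), of "k - 1"]
      k Q0 \<open>u \<notin> set (P v)\<close> \<open>Q ! (k - 1) \<in> set (P v)\<close>
    show False by simp
  qed
  with third_neighbour_in_P[OF v \<open>distinct [u, Q ! (k - 1), Q ! Suc k]\<close> \<open>E u v\<close> pred succ]
    \<open>u \<notin> set (P v)\<close>
  have "Q ! Suc k \<in> set (P v)"
    by blast
  then have "P v \<noteq> []"
    by auto
  from gpath_after_sole_crossing[OF P_sole_crossing[OF v this] Q(1) k(3)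
      \<open>Q ! Suc k \<in> set (P v)\<close>, of "length Q - 1"] k \<open>Q \<noteq> []\<close>
  have "last Q \<in> set (P v)"
    by (simp add: last_conv_nth)
  then show ?thesis
    using length_le_tau[OF finite_V Q(1), of "last Q"] Q(3) by auto
qed

lemma branch_tau_side:
  assumes gap: "k \<notin> tau V E ` V" and c: "c \<in> set C" and x: "x \<in> set (branch c)"
  shows "tau V E x < k \<longleftrightarrow> tau V E c < k"
proof (rule ccontr)
  assume "(tau V E x < k) \<noteq> (tau V E c < k)"
  moreover have "tau V E x \<noteq> k" "tau V E c \<noteq> k"
    using gap x set_branch_subset_V[OF c] by auto
  ultimately have "tau V E x \<le> k \<and> k \<le> tau V E c \<or> tau V E c \<le> k \<and> k \<le> tau V E x"
    by linarith
  then obtain w where "w \<in> set (branch c)" "tau V E w = k"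
    using branch_tau_interval[OF c x, of c k] branch_tau_interval[OF c _ x, of c k] by auto
  with gap set_branch_subset_V[OF c] show False by blast
qed

lemma cycle_edge_tau_side:
  assumes gap: "k \<notin> tau V E ` V" and "u \<in> set C" "v \<in> set C" "E u v"
  shows "tau V E u < k \<longleftrightarrow> tau V E v < k"
proof -
  have no_jump: "\<not> (tau V E v < k \<and> k < tau V E u)"
    if uv: "u \<in> set C" "v \<in> set C" "E u v" for u v
  proof
    assume "tau V E v < k \<and> k < tau V E u"
    then obtain w where "w \<in> set (P v)" "k < tau V E w"
      using cycle_edge_tau_gap[OF uv] by force
    with branch_tau_side[OF gap \<open>v \<in> set C\<close>, of w] \<open>tau V E v < k \<and> k < tau V E u\<close>
    show False by simp
  qed
  have "tau V E u \<noteq> k" "tau V E v \<noteq> k"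
    using gap assms(2,3) V_eq by auto
  with no_jump[OF assms(2-4)] no_jump[OF assms(3,2) sympD[OF symp_E assms(4)]] show ?thesis
    by linarith
qed

lemma tau_side_uniform:
  assumes gap: "k \<notin> tau V E ` V" and "x \<in> V" "y \<in> V"
  shows "tau V E x < k \<longleftrightarrow> tau V E y < k"
proof -
  have cycle: "tau V E (C ! i) < k \<longleftrightarrow> tau V E (C ! 0) < k" if "i < length C" for i
    using that
  proof (induction i)
    case (Suc i)
    then show ?case
      using cycle_edge_tau_side[OF gap _ _ cycle_edge[OF Suc.prems]] by simp
  qed simp
  have "tau V E z < k \<longleftrightarrow> tau V E (C ! 0) < k" if z: "z \<in> V" for z
  proof -
    obtain c where c: "c \<in> set C" "z \<in> set (branch c)"
      using V_branchE[OF z] by blast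
    then obtain i where "i < length C" "C ! i = c"
      by (meson in_set_conv_nth)
    with cycle branch_tau_side[OF gap c] show ?thesis
      by blast
  qed
  with assms(2,3) show ?thesis
    by blast
qed

lemma detour_full: "detour_full V E"
  unfolding detour_full_def
proof (intro allI impI)
  fix k
  assume k: "Min (tau V E ` V) \<le> k \<and> k \<le> Max (tau V E ` V)"
  have "C ! 0 \<in> set C"
    using length_C by (intro nth_mem) linarith
  then have "tau V E ` V \<noteq> {}"
    using V_eq by blast
  moreover have "finite (tau V E ` V)"
    using finite_V by (rule finite_imageI)
  ultimately have "Min (tau V E ` V) \<in> tau V E ` V" "Max (tau V E ` V) \<in> tau V E ` V"
    using Min_in Max_in by blast+
  then obtain x y where "x \<in> V" "y \<in> V"
    and x: "tau V E x = Min (tau V E ` V)" and y: "tau V E y = Max (tau V E ` V)"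
    by (metis imageE)
  show "\<exists>v\<in>V. tau V E v = k"
  proof (rule ccontr)
    assume "\<not> (\<exists>v\<in>V. tau V E v = k)"
    then have gap: "k \<notin> tau V E ` V"
      by blast
    then have "tau V E x \<noteq> k"
      using \<open>x \<in> V\<close> by blast
    with x k have "tau V E x < k"
      by linarith
    with tau_side_uniform[OF gap \<open>x \<in> V\<close> \<open>y \<in> V\<close>] y k show False
      by linarith
  qed
qed

end

theorem theorem1p20:
  fixes V :: "'a set" and E :: "'a \<Rightarrow> 'a \<Rightarrow> bool"
  assumes "path_unicyclic V E"
  shows "detour_full V E"
proof -
  from assms obtain C P where "cycle_with_paths V E C P"
    unfolding path_unicyclic_def
    by (elim exE conjE) (rule_tac C = C and P = P in that, rule cycle_with_paths.intro; simp)
  then show ?thesis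
    by (rule cycle_with_paths.detour_full)
qed

end
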